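(* For every $N\in\mathbb{N}$, with $\pi_N$ the law of the number of fixed points of a uniformly random permutation of $\{1,\dots,N\}$ and $\mathcal{P}$ the Poisson law of parameter $1$, $$\|\pi_N-\mathcal{P}\|_{\mathrm{tv}}\le\frac{2^{N+1}}{(N+1)!}.$$
   Context: $\|\mu-\mu'\|_{\mathrm{tv}}=\sup_{A\subset\mathbb{Z}_+}|\mu(A)-\mu'(A)|=\sum_n(\mu(n)-\mu'(n))_+$. *)

theory Defs
  imports "HOL-Probability.Probability"
begin

definition fixpt_law :: "nat \<Rightarrow> nat pmf" where
  "fixpt_law N = map_pmf (\<lambda>\<sigma>. card {i \<in> {1..N}. \<sigma> i = i})
                   (pmf_of_set {\<sigma>. \<sigma> permutes {1..N}})"

definition tv_dist :: "nat pmf \<Rightarrow> nat pmf \<Rightarrow> real" where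
  "tv_dist \<mu> \<mu>' = (\<Sum>n. max 0 (pmf \<mu> n - pmf \<mu>' n))"

end

theory Submission imports Defs begin

text \<open>The permutations of an \<open>n\<close>-set with exactly \<open>k\<close> fixed points are counted by
  \<open>(n choose k) * D (n - k)\<close>, where \<open>D m = m! * (\<Sum>j\<le>m. (-1)^j / j!)\<close> is the number of
  derangements of an \<open>m\<close>-set; the formula for \<open>D\<close> follows by inverting
  \<open>n! = (\<Sum>k\<le>n. (n choose k) * D k)\<close>. Hence \<open>\<pi>\<^sub>N(k)\<close> is the \<open>(N - k)\<close>-th partial sum of the
  series of \<open>e\<^sup>-\<^sup>1\<close> divided by \<open>k!\<close>, while the Poisson weight is \<open>e\<^sup>-\<^sup>1 / k!\<close>. The alternating
  series bound makes the positive part at \<open>k \<le> N\<close> at most \<open>1 / (k! (N + 1 - k)!)\<close>, and these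
  terms sum to at most \<open>2\<^bsup>N+1\<^esup> / (N + 1)!\<close>.\<close>

definition exp_neg_one_sum :: "nat \<Rightarrow> real" where
  "exp_neg_one_sum m = (\<Sum>j\<le>m. (-1) ^ j / fact j)"

lemma sum_alternating_div_fact_fact:
  "(\<Sum>i\<le>s. (-1::real) ^ i / (fact i * fact (s - i))) = (if s = 0 then 1 else 0)"
proof -
  have "(\<Sum>i\<le>s. (-1::real) ^ i / (fact i * fact (s - i)))
      = (\<Sum>i\<le>s. of_nat (s choose i) * (-1) ^ i * 1 ^ (s - i)) / fact s"
    by (simp add: sum_divide_distrib binomial_fact field_simps)
  also have "\<dots> = (-1 + 1) ^ s / fact s"
    by (simp only: binomial_ring)
  finally show ?thesis by simp
qed

lemma sum_exp_neg_one_sum_div_fact: "(\<Sum>k\<le>n. exp_neg_one_sum k / fact (n - k)) = 1"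
proof -
  let ?g = "\<lambda>i j. (-1::real) ^ i / (fact i * fact j)"
  have "(\<Sum>k\<le>n. exp_neg_one_sum k / fact (n - k)) = (\<Sum>j\<le>n. exp_neg_one_sum (n - j) / fact j)"
    using sum.atLeastAtMost_rev[of "\<lambda>j. exp_neg_one_sum (n - j) / fact j" 0 n]
    by (simp add: atLeast0AtMost)
  also have "\<dots> = (\<Sum>j\<le>n. \<Sum>i\<le>n - j. ?g i j)"
    by (simp add: exp_neg_one_sum_def sum_divide_distrib)
  also have "\<dots> = (\<Sum>(j, i)\<in>Sigma {..n} (\<lambda>j. {..n - j}). ?g i j)"
    by (rule sum.Sigma) auto
  also have "\<dots> = (\<Sum>(i, j)\<in>{(i, j). i + j \<le> n}. ?g i j)"
    by (rule sum.reindex_bij_witness[where i="\<lambda>(i, j). (j, i)" and j="\<lambda>(j, i). (i, j)"]) auto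
  also have "\<dots> = (\<Sum>s\<le>n. \<Sum>i\<le>s. ?g i (s - i))"
    by (rule sum.triangle_reindex_eq)
  also have "\<dots> = 1"
    by (simp add: sum_alternating_div_fact_fact)
  finally show ?thesis .
qed

lemma sum_binomial_fact_exp_neg_one_sum:
  "(\<Sum>k\<le>n. real (n choose k) * (fact k * exp_neg_one_sum k)) = fact n"
proof -
  have "(\<Sum>k\<le>n. real (n choose k) * (fact k * exp_neg_one_sum k))
      = fact n * (\<Sum>k\<le>n. exp_neg_one_sum k / fact (n - k))"
    by (simp add: sum_distrib_left binomial_fact field_simps)
  then show ?thesis
    by (simp add: sum_exp_neg_one_sum_div_fact)
qed

lemma alternating_sum_minus_suminf_le:
  fixes a :: "nat \<Rightarrow> real"
  assumes "a \<longlonglongrightarrow> 0" and "\<And>n. 0 \<le> a n" and "\<And>n. a (Suc n) \<le> a n"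
  shows "(\<Sum>i<n. (-1) ^ i * a i) - (\<Sum>i. (-1) ^ i * a i) \<le> a n"
proof (cases "even n")
  case True
  then obtain m where "n = 2 * m" by blast
  then show ?thesis
    using summable_Leibniz'(2)[OF assms, of m] assms(2)[of n] by simp
next
  case False
  then obtain m where n: "n = 2 * m + 1" by (blast elim: oddE)
  have "(\<Sum>i<2 * (m + 1). (-1) ^ i * a i) \<le> (\<Sum>i. (-1) ^ i * a i)"
    by (rule summable_Leibniz'(2)[OF assms])
  moreover have "(\<Sum>i<2 * (m + 1). (-1) ^ i * a i) = (\<Sum>i<n. (-1) ^ i * a i) - a n"
    using n by simp
  ultimately show ?thesis by simp
qed

lemma exp_neg_one_sum_minus_exp_le: "exp_neg_one_sum m - exp (-1) \<le> 1 / fact (Suc m)"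
proof -
  let ?a = "\<lambda>n. 1 / fact n :: real"
  have "?a \<longlonglongrightarrow> 0"
    using summable_LIMSEQ_zero[OF summable_exp[of "1::real"]] by (simp add: divide_inverse)
  moreover have "?a (Suc n) \<le> ?a n" for n
    by (simp add: divide_inverse fact_mono le_imp_inverse_le inverse_le_1_iff)
  ultimately have "(\<Sum>i<Suc m. (-1) ^ i * ?a i) - (\<Sum>i. (-1) ^ i * ?a i) \<le> ?a (Suc m)"
    by (intro alternating_sum_minus_suminf_le) auto
  moreover have "(\<lambda>n. (-1) ^ n * ?a n) sums exp (-1)"
    using exp_converges[of "-1::real"] by (simp add: divide_inverse mult.commute)
  ultimately show ?thesis
    by (simp add: exp_neg_one_sum_def sums_iff lessThan_Suc_atMost)
qed

definition derangements :: "'a set \<Rightarrow> ('a \<Rightarrow> 'a) set" where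
  "derangements A = {\<sigma>. \<sigma> permutes A \<and> (\<forall>x\<in>A. \<sigma> x \<noteq> x)}"

lemma finite_derangements: "finite A \<Longrightarrow> finite (derangements A)"
  unfolding derangements_def by (rule finite_subset[OF _ finite_permutations]) auto

lemma derangements_moved_eq: "\<sigma> \<in> derangements B \<Longrightarrow> B \<subseteq> A \<Longrightarrow> {x\<in>A. \<sigma> x \<noteq> x} = B"
  unfolding derangements_def using permutes_not_in[of \<sigma> B] by blast

lemma permutes_in_derangements_moved: "\<sigma> permutes A \<Longrightarrow> \<sigma> \<in> derangements {x\<in>A. \<sigma> x \<noteq> x}"
  unfolding derangements_def permutes_def by auto

lemma permutes_moved_eq_UN_derangements:
  "{\<sigma>. \<sigma> permutes A \<and> P {x\<in>A. \<sigma> x \<noteq> x}} = (\<Union>B\<in>{B. B \<subseteq> A \<and> P B}. derangements B)"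
proof (intro equalityI subsetI)
  fix \<sigma> assume "\<sigma> \<in> {\<sigma>. \<sigma> permutes A \<and> P {x\<in>A. \<sigma> x \<noteq> x}}"
  then show "\<sigma> \<in> (\<Union>B\<in>{B. B \<subseteq> A \<and> P B}. derangements B)"
    using permutes_in_derangements_moved[of \<sigma> A] by (intro UN_I[of "{x\<in>A. \<sigma> x \<noteq> x}"]) auto
next
  fix \<sigma> assume "\<sigma> \<in> (\<Union>B\<in>{B. B \<subseteq> A \<and> P B}. derangements B)"
  then obtain B where B: "B \<subseteq> A" "P B" and \<sigma>: "\<sigma> \<in> derangements B" by blast
  have "\<sigma> permutes A"
    using \<sigma> B(1) permutes_subset unfolding derangements_def by blast
  moreover have "P {x\<in>A. \<sigma> x \<noteq> x}"
    using derangements_moved_eq[OF \<sigma> B(1)] B(2) by simp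
  ultimately show "\<sigma> \<in> {\<sigma>. \<sigma> permutes A \<and> P {x\<in>A. \<sigma> x \<noteq> x}}" by simp
qed

lemma card_permutes_moved:
  assumes "finite A"
  shows "card {\<sigma>. \<sigma> permutes A \<and> P {x\<in>A. \<sigma> x \<noteq> x}}
           = (\<Sum>B | B \<subseteq> A \<and> P B. card (derangements B))"
  unfolding permutes_moved_eq_UN_derangements
proof (rule card_UN_disjoint)
  show "finite {B. B \<subseteq> A \<and> P B}" using assms by simp
  show "\<forall>B\<in>{B. B \<subseteq> A \<and> P B}. finite (derangements B)"
    using assms by (auto intro: finite_derangements finite_subset)
  show "\<forall>B\<in>{B. B \<subseteq> A \<and> P B}. \<forall>C\<in>{B. B \<subseteq> A \<and> P B}.
          B \<noteq> C \<longrightarrow> derangements B \<inter> derangements C = {}"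
    using derangements_moved_eq[of _ _ A] by (metis (no_types, lifting) disjoint_iff mem_Collect_eq)
qed

lemma sum_Pow_card:
  assumes "finite A"
  shows "(\<Sum>B\<in>Pow A. h (card B)) = (\<Sum>k\<le>card A. of_nat (card A choose k) * h k)"
proof -
  have "(\<Sum>B\<in>Pow A. h (card B)) = (\<Sum>k\<le>card A. \<Sum>B\<in>{B\<in>Pow A. card B = k}. h (card B))"
  proof (rule sum.group[symmetric])
    show "card ` Pow A \<subseteq> {..card A}"
      using assms card_mono by fastforce
  qed (use assms in auto)
  also have "\<dots> = (\<Sum>k\<le>card A. of_nat (card A choose k) * h k)"
    using n_subsets[OF assms] by (intro sum.cong refl) (simp add: Pow_def)
  finally show ?thesis .
qed

lemma fact_card_eq_sum_card_derangements:
  assumes "finite A"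
  shows "fact (card A) = (\<Sum>B\<in>Pow A. card (derangements B))"
proof -
  have "fact (card A) = card {\<sigma>. \<sigma> permutes A \<and> True}"
    using card_permutations[OF refl assms] by simp
  also have "\<dots> = (\<Sum>B | B \<subseteq> A \<and> True. card (derangements B))"
    by (rule card_permutes_moved[OF assms])
  finally show ?thesis by (simp add: Pow_def)
qed

lemma card_derangements:
  "finite A \<Longrightarrow> real (card (derangements A)) = fact (card A) * exp_neg_one_sum (card A)"
proof (induction "card A" arbitrary: A rule: less_induct)
  case less
  let ?D = "\<lambda>B. real (card (derangements B))" and ?F = "\<lambda>n. fact n * exp_neg_one_sum n"
  have IH: "?D B = ?F (card B)" if "B \<in> Pow A - {A}" for B
    using that less.hyps[of B] less.prems psubset_card_mono finite_subset by auto
  have "fact (card A) = (\<Sum>B\<in>Pow A. ?D B)"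
    using fact_card_eq_sum_card_derangements[OF less.prems] by (metis of_nat_fact of_nat_sum)
  also have "\<dots> = ?D A + (\<Sum>B\<in>Pow A - {A}. ?D B)"
    using less.prems by (simp add: sum.remove[of _ A])
  also have "(\<Sum>B\<in>Pow A - {A}. ?D B) = (\<Sum>B\<in>Pow A - {A}. ?F (card B))"
    using IH by (rule sum.cong[OF refl])
  also have "\<dots> = (\<Sum>B\<in>Pow A. ?F (card B)) - ?F (card A)"
    using less.prems by (simp add: sum.remove[of _ A])
  also have "(\<Sum>B\<in>Pow A. ?F (card B)) = fact (card A)"
    using sum_Pow_card[OF less.prems, of ?F] sum_binomial_fact_exp_neg_one_sum by simp
  finally show ?case by simp
qed

lemma card_permutes_fixed_points:
  assumes "finite A" and "k \<le> card A"
  shows "real (card {\<sigma>. \<sigma> permutes A \<and> card {x\<in>A. \<sigma> x = x} = k})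
           = real (card A choose k) * (fact (card A - k) * exp_neg_one_sum (card A - k))"
proof -
  let ?\<B> = "{B. B \<subseteq> A \<and> card B = card A - k}"
  have "{x\<in>A. \<sigma> x = x} = A - {x\<in>A. \<sigma> x \<noteq> x}" for \<sigma> :: "'a \<Rightarrow> 'a" by blast
  then have "card {\<sigma>. \<sigma> permutes A \<and> card {x\<in>A. \<sigma> x = x} = k}
      = (\<Sum>B | B \<subseteq> A \<and> card (A - B) = k. card (derangements B))"
    using card_permutes_moved[OF assms(1), of "\<lambda>B. card (A - B) = k"] by simp
  also have "{B. B \<subseteq> A \<and> card (A - B) = k} = ?\<B>"
  proof (intro Collect_cong conj_cong refl)
    fix B assume "B \<subseteq> A"
    then show "card (A - B) = k \<longleftrightarrow> card B = card A - k"
      using assms card_mono[OF assms(1)] by (auto simp: card_Diff_subset finite_subset)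
  qed
  finally have "real (card {\<sigma>. \<sigma> permutes A \<and> card {x\<in>A. \<sigma> x = x} = k})
      = (\<Sum>B\<in>?\<B>. real (card (derangements B)))"
    by simp
  also have "\<dots> = (\<Sum>B\<in>?\<B>. fact (card A - k) * exp_neg_one_sum (card A - k))"
  proof (rule sum.cong[OF refl])
    fix B assume "B \<in> ?\<B>"
    then show "real (card (derangements B)) = fact (card A - k) * exp_neg_one_sum (card A - k)"
      using card_derangements[of B] finite_subset[OF _ assms(1)] by simp
  qed
  also have "\<dots> = real (card A choose k) * (fact (card A - k) * exp_neg_one_sum (card A - k))"
    using n_subsets[OF assms(1)] binomial_symmetric[OF assms(2)] by simp
  finally show ?thesis .
qed

lemma pmf_fixpt_law:
  "pmf (fixpt_law N) k = (if k \<le> N then exp_neg_one_sum (N - k) / fact k else 0)"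
proof -
  let ?P = "{\<sigma>. \<sigma> permutes {1..N}}" and ?fix = "\<lambda>\<sigma>. card {i \<in> {1..N}. \<sigma> i = i}"
  have "?P \<noteq> {}" using permutes_id by blast
  then have "pmf (fixpt_law N) k = real (card {\<sigma>. \<sigma> permutes {1..N} \<and> ?fix \<sigma> = k}) / fact N"
    unfolding fixpt_law_def
    by (simp add: pmf_map measure_pmf_of_set finite_permutations card_permutations Int_def)
  also have "\<dots> = (if k \<le> N then exp_neg_one_sum (N - k) / fact k else 0)"
  proof (cases "k \<le> N")
    case True
    then show ?thesis
      using card_permutes_fixed_points[of "{1..N}" k] by (simp add: binomial_fact field_simps)
  next
    case False
    then have "{\<sigma>. \<sigma> permutes {1..N} \<and> ?fix \<sigma> = k} = {}"
      using card_mono[of "{1..N}" "{i \<in> {1..N}. _ i = i}"] by fastforce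
    then show ?thesis using False by (simp only: card.empty) simp
  qed
  finally show ?thesis .
qed

lemma fixpt_law_minus_poisson_le:
  assumes "k \<le> N"
  shows "pmf (fixpt_law N) k - pmf (poisson_pmf 1) k \<le> 1 / (fact k * fact (N + 1 - k))"
proof -
  have "pmf (fixpt_law N) k - pmf (poisson_pmf 1) k = (exp_neg_one_sum (N - k) - exp (-1)) / fact k"
    using assms by (simp add: pmf_fixpt_law field_simps)
  also have "\<dots> \<le> (1 / fact (Suc (N - k))) / fact k"
    by (rule divide_right_mono[OF exp_neg_one_sum_minus_exp_le]) simp
  finally show ?thesis
    using assms by (simp add: Suc_diff_le mult.commute)
qed

lemma sum_inverse_fact_fact: "(\<Sum>k\<le>n. 1 / (fact k * fact (n - k))) = 2 ^ n / (fact n :: real)"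
proof -
  have "(\<Sum>k\<le>n. 1 / (fact k * fact (n - k))) = (\<Sum>k\<le>n. real (n choose k)) / (fact n :: real)"
    unfolding sum_divide_distrib by (intro sum.cong refl) (simp add: binomial_fact)
  then show ?thesis
    by (simp flip: of_nat_sum add: choose_row_sum)
qed

theorem mainTheorem15:
  fixes N :: nat
  shows "tv_dist (fixpt_law N) (poisson_pmf 1) \<le> 2 ^ (N + 1) / fact (N + 1)"
proof -
  let ?g = "\<lambda>n. max 0 (pmf (fixpt_law N) n - pmf (poisson_pmf 1) n)"
  have "tv_dist (fixpt_law N) (poisson_pmf 1) = (\<Sum>k\<le>N. ?g k)"
    unfolding tv_dist_def by (rule suminf_finite) (auto simp: pmf_fixpt_law)
  also have "\<dots> \<le> (\<Sum>k\<le>N. 1 / (fact k * fact (N + 1 - k)))"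
    by (intro sum_mono max.boundedI fixpt_law_minus_poisson_le) auto
  also have "\<dots> \<le> (\<Sum>k\<le>N + 1. 1 / (fact k * fact (N + 1 - k)))"
    by (rule sum_mono2) auto
  also have "\<dots> = 2 ^ (N + 1) / fact (N + 1)"
    by (rule sum_inverse_fact_fact)
  finally show ?thesis .
qed

end
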